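(* Let $d\ge 1$ be an integer and let $m=d^d\cdot d^3$. Then $HG(B_{d,m})\ge q$, where $q=d^d/d^2=d^{d-2}$.
   Context: The book graph $B_{d,m}$ is obtained from a complete graph on $d$ vertices (the central clique) by adding an independent set of $m$ new vertices (the outer vertices) and joining each of them to all $d$ vertices of the central clique. The hat guessing game on a finite simple graph $G$ with $q$ colors: each vertex (player) is assigned a hat whose color is an arbitrary element of a fixed set $Q$ of $q$ colors. Each player sees the hat colors of exactly its neighbors in $G$ (not its own). Before the colors are assigned, the players fix a deterministic guessing strategy: for each vertex $w$, a function from the colorings of the neighbors of $w$ to $Q$, which is $w$'s guess for its own color. No communication is allowed. The strategy is winning if for every assignment of colors from $Q$ to all vertices, at least one vertex guesses its own color correctly. The hat guessing number $HG(G)$ is the largest integer $q$ for which a winning strategy with $q$ colors exists. *)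

theory Defs
  imports Main
begin

text \<open>A finite simple graph is given by a vertex set V and a symmetric irreflexive
adjacency relation E (only its restriction to V matters).\<close>

definition hat_winning :: "'a set \<Rightarrow> ('a \<Rightarrow> 'a \<Rightarrow> bool) \<Rightarrow> nat \<Rightarrow> bool" where
  "hat_winning V E q \<longleftrightarrow>
     (\<exists>f :: 'a \<Rightarrow> ('a \<Rightarrow> nat) \<Rightarrow> nat.
        (\<forall>v\<in>V. \<forall>c c'. (\<forall>u\<in>V. E v u \<longrightarrow> c u = c' u) \<longrightarrow> f v c = f v c') \<and>
        (\<forall>v\<in>V. \<forall>c. f v c < q) \<and>
        (\<forall>c. (\<forall>v\<in>V. c v < q) \<longrightarrow> (\<exists>v\<in>V. f v c = c v)))"

definition HG :: "'a set \<Rightarrow> ('a \<Rightarrow> 'a \<Rightarrow> bool) \<Rightarrow> nat" where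
  "HG V E = (GREATEST q. hat_winning V E q)"

text \<open>Book graph B_{d,m}: central clique Inl 0..Inl (d-1), outer vertices Inr 0..Inr (m-1).\<close>
definition book_vertices :: "nat \<Rightarrow> nat \<Rightarrow> (nat + nat) set" where
  "book_vertices d m = Inl ` {..<d} \<union> Inr ` {..<m}"

fun book_adj :: "(nat + nat) \<Rightarrow> (nat + nat) \<Rightarrow> bool" where
  "book_adj (Inl i) (Inl j) = (i \<noteq> j)"
| "book_adj (Inl i) (Inr j) = True"
| "book_adj (Inr i) (Inl j) = True"
| "book_adj (Inr i) (Inr j) = False"

end

theory Submission
  imports Defs "HOL-Library.FuncSet" Complex_Main
begin

text \<open>Write the colors of the clique as a point x of the grid {..<q}^d and those of the
  outer vertices as y. Outer vertex j guesses G_j(x), where a counting argument provides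
  functions G_j such that on every set of d^d + 1 grid points some G_j takes all q values;
  so for each y at most d^d points x make every outer vertex wrong. A discrete
  Loomis--Whitney inequality shows that a set of at most d^d grid points meets at least as
  many axis-parallel lines as it has points, so by Hall's theorem each such x can be
  given its own line through it. Clique vertex i sees y and the line through x in
  direction i, and guesses the i-th coordinate of the point owning that line; when all
  outer vertices are wrong, the vertex whose direction is that of the line owned by x
  guesses correctly.\<close>

section \<open>Hall's marriage theorem\<close>

definition hall_condition :: "'a set \<Rightarrow> ('a \<Rightarrow> 'b set) \<Rightarrow> bool" where
  "hall_condition S A \<longleftrightarrow> (\<forall>T\<subseteq>S. card T \<le> card (\<Union>(A ` T)))"

lemma hall_condition_remove_representative:
  assumes surplus: "\<And>T. T \<subseteq> S \<Longrightarrow> T \<noteq> {} \<Longrightarrow> T \<noteq> S \<Longrightarrow> card T < card (\<Union>(A ` T))"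
    and x: "x \<in> S"
  shows "hall_condition (S - {x}) (\<lambda>y. A y - {e})"
  unfolding hall_condition_def
proof (intro allI impI)
  fix T assume T: "T \<subseteq> S - {x}"
  show "card T \<le> card (\<Union>y\<in>T. A y - {e})"
  proof (cases "T = {}")
    case False
    have "card T < card (\<Union>(A ` T))" using surplus[of T] T False x by auto
    then have "card T \<le> card (\<Union>(A ` T)) - 1" by linarith
    also have "\<dots> \<le> card (\<Union>(A ` T) - {e})" by (simp add: card_Diff_singleton_if)
    also have "\<Union>(A ` T) - {e} = (\<Union>y\<in>T. A y - {e})" by auto
    finally show ?thesis .
  qed simp
qed

lemma hall_condition_outside_critical:
  assumes hall: "hall_condition S A" and fin: "finite S" "\<forall>x\<in>S. finite (A x)"
    and T: "T \<subseteq> S" "card T = card (\<Union>(A ` T))"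
  shows "hall_condition (S - T) (\<lambda>y. A y - \<Union>(A ` T))"
  unfolding hall_condition_def
proof (intro allI impI)
  fix R assume R: "R \<subseteq> S - T"
  have fin_RT: "finite R" "finite T"
    using R T(1) fin(1) by (meson Diff_subset finite_subset subset_trans)+
  have "finite (\<Union>(A ` T))" using T(1) fin by (meson finite_UN_I finite_subset subsetD)
  moreover have "(\<Union>y\<in>R. A y - \<Union>(A ` T)) = \<Union>(A ` (R \<union> T)) - \<Union>(A ` T)" by auto
  ultimately have "card (\<Union>y\<in>R. A y - \<Union>(A ` T)) = card (\<Union>(A ` (R \<union> T))) - card T"
    using T(2) by (simp add: card_Diff_subset)
  moreover have "card (R \<union> T) \<le> card (\<Union>(A ` (R \<union> T)))"
    using hall R T(1) unfolding hall_condition_def by blast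
  moreover have "card (R \<union> T) = card R + card T"
    using R fin_RT by (subst card_Un_disjoint) auto
  ultimately show "card R \<le> card (\<Union>y\<in>R. A y - \<Union>(A ` T))" by linarith
qed

text \<open>Either every nonempty proper subfamily has surplus, and any representative of one
  set can be fixed, or some subfamily is critical and it and its complement are matched
  separately.\<close>

theorem Hall_marriage:
  assumes "finite S" "\<forall>x\<in>S. finite (A x)" "hall_condition S A"
  shows "\<exists>f. (\<forall>x\<in>S. f x \<in> A x) \<and> inj_on f S"
  using assms
proof (induction "card S" arbitrary: S A rule: less_induct)
  case less
  note IH = less.hyps and fin = less.prems(1,2) and hall = less.prems(3)
  show ?case
  proof (cases "\<exists>T. T \<subseteq> S \<and> T \<noteq> {} \<and> T \<noteq> S \<and> card T = card (\<Union>(A ` T))")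
    case no_critical: False
    show ?thesis
    proof (cases "S = {}")
      case False
      then obtain x where x: "x \<in> S" by auto
      have "card {x} \<le> card (\<Union>(A ` {x}))"
        using hall x unfolding hall_condition_def by blast
      then have "0 < card (A x)" by simp
      then obtain e where e: "e \<in> A x" by (metis card_gt_0_iff ex_in_conv)
      have "hall_condition (S - {x}) (\<lambda>y. A y - {e})"
      proof (rule hall_condition_remove_representative[OF _ x])
        fix T assume T: "T \<subseteq> S" "T \<noteq> {}" "T \<noteq> S"
        have "card T \<le> card (\<Union>(A ` T))" using hall T(1) unfolding hall_condition_def by blast
        moreover have "card T \<noteq> card (\<Union>(A ` T))" using no_critical T by blast
        ultimately show "card T < card (\<Union>(A ` T))" by simp
      qed
      then obtain f where f: "\<forall>y\<in>S - {x}. f y \<in> A y - {e}" "inj_on f (S - {x})"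
        using IH[of "S - {x}" "\<lambda>y. A y - {e}"] card_Diff1_less[OF fin(1) x] fin by auto
      have "inj_on (f(x := e)) (S - {x})" using f(2) by (simp add: inj_on_def)
      moreover have "e \<notin> f(x := e) ` (S - {x})" using f(1) by auto
      ultimately have "inj_on (f(x := e)) (insert x (S - {x}))" by (subst inj_on_insert) simp
      then have "inj_on (f(x := e)) S" using insert_Diff[OF x] by simp
      then show ?thesis using f(1) e by (intro exI[of _ "f(x := e)"]) auto
    qed simp
  next
    case True
    then obtain T where T: "T \<subseteq> S" "T \<noteq> {}" "T \<noteq> S" "card T = card (\<Union>(A ` T))" by blast
    have finT: "finite T" using T(1) fin(1) by (rule finite_subset)
    have "card T < card S" using T(1,3) by (intro psubset_card_mono[OF fin(1)]) blast
    moreover have "hall_condition T A" using hall T(1) by (auto simp: hall_condition_def)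
    ultimately obtain f1 where f1: "\<forall>y\<in>T. f1 y \<in> A y" "inj_on f1 T"
      using IH[of T A] finT fin(2) T(1) by blast
    have "0 < card T" using finT T(2) by (simp add: card_gt_0_iff)
    then have "card (S - T) < card S"
      using card_Diff_subset[OF finT T(1)] card_mono[OF fin(1) T(1)] by linarith
    moreover have "hall_condition (S - T) (\<lambda>y. A y - \<Union>(A ` T))"
      using hall fin T(1,4) by (rule hall_condition_outside_critical)
    ultimately obtain f2 where f2: "\<forall>y\<in>S - T. f2 y \<in> A y - \<Union>(A ` T)" "inj_on f2 (S - T)"
      using IH[of "S - T" "\<lambda>y. A y - \<Union>(A ` T)"] fin by blast
    define g where "g y = (if y \<in> T then f1 y else f2 y)" for y
    have side: "g a \<in> \<Union>(A ` T) \<longleftrightarrow> a \<in> T" if "a \<in> S" for a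
      using that f1(1) f2(1) by (auto simp: g_def)
    have "inj_on g S"
    proof (rule inj_onI)
      fix a b assume a: "a \<in> S" and b: "b \<in> S" and eq: "g a = g b"
      then have "a \<in> T \<longleftrightarrow> b \<in> T" using side by metis
      then show "a = b"
        using a b eq inj_onD[OF f1(2)] inj_onD[OF f2(2)] by (cases "a \<in> T") (auto simp: g_def)
    qed
    then show ?thesis using f1(1) f2(1) by (intro exI[of _ g]) (auto simp: g_def)
  qed
qed

section \<open>Axis-parallel lines through a set of grid points\<close>

lemma scaled_Bernoulli_inequality:
  fixes N k k' :: real and d :: nat
  assumes N: "0 \<le> N" and k: "0 < k" and k': "0 < k'" and Nk: "N \<le> k ^ Suc d"
  shows "Suc d * N / k \<le> k' ^ d + d * N / k'"
proof -
  define u where "u = k' / k"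
  have u: "0 < u" using k k' by (simp add: u_def)
  have lhs: "Suc d * N / k - d * N / k' = (N / k') * (Suc d * u - d)"
    using k k' by (simp add: u_def field_simps)
  show ?thesis
  proof (cases "Suc d * u - d \<le> 0")
    case True
    then have "(N / k') * (Suc d * u - d) \<le> 0"
      using N k' by (intro mult_nonneg_nonpos) auto
    moreover have "0 \<le> k' ^ d" using k' by simp
    ultimately show ?thesis using lhs by linarith
  next
    case False
    have "(N / k') * (Suc d * u - d) \<le> (k ^ Suc d / k') * (Suc d * u - d)"
      using False Nk k' by (intro mult_right_mono divide_right_mono) auto
    also have "\<dots> \<le> (k ^ Suc d / k') * u ^ Suc d"
    proof (rule mult_left_mono)
      show "Suc d * u - d \<le> u ^ Suc d"
        using Bernoulli_inequality[of "u - 1" "Suc d"] u by (simp add: algebra_simps)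
    qed (use k k' in simp)
    also have "\<dots> = k' ^ d"
      using k k' by (simp add: u_def power_divide field_simps)
    finally show ?thesis using lhs by linarith
  qed
qed

definition remove_nth :: "nat \<Rightarrow> 'a list \<Rightarrow> 'a list" where
  "remove_nth i xs = take i xs @ drop (Suc i) xs"

lemma remove_nth_0_Cons [simp]: "remove_nth 0 (c # x) = x"
  by (simp add: remove_nth_def)

lemma remove_nth_Suc_Cons [simp]: "remove_nth (Suc i) (c # x) = c # remove_nth i x"
  by (simp add: remove_nth_def)

text \<open>The axis-parallel line through a point x of the grid in direction i is encoded
  by i together with x with its i-th coordinate deleted.\<close>

definition axis_lines :: "nat \<Rightarrow> 'a list set \<Rightarrow> (nat \<times> 'a list) set" where
  "axis_lines d T = (\<Union>x\<in>T. (\<lambda>i. (i, remove_nth i x)) ` {..<d})"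

lemma finite_axis_lines: "finite T \<Longrightarrow> finite (axis_lines d T)"
  by (simp add: axis_lines_def)

definition slice :: "'a \<Rightarrow> 'a list set \<Rightarrow> 'a list set" where
  "slice c T = {x. c # x \<in> T}"

lemma slice_subset_tl_image: "slice c T \<subseteq> tl ` T"
  unfolding slice_def by force

lemma finite_slice: "finite T \<Longrightarrow> finite (slice c T)"
  by (meson finite_imageI finite_subset slice_subset_tl_image)

lemma axis_lines_Suc:
  assumes "\<forall>x\<in>T. length x = Suc d"
  shows "axis_lines (Suc d) T = Pair 0 ` tl ` T \<union>
    (\<Union>c\<in>hd ` T. (\<lambda>(i, z). (Suc i, c # z)) ` axis_lines d (slice c T))"
    (is "_ = ?first \<union> ?later")
proof (intro set_eqI iffI)
  fix p assume "p \<in> axis_lines (Suc d) T"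
  then obtain x i where xi: "x \<in> T" "i < Suc d" "p = (i, remove_nth i x)"
    by (auto simp: axis_lines_def)
  obtain c x' where x: "x = c # x'" using assms xi(1) by (cases x) auto
  show "p \<in> ?first \<union> ?later"
  proof (cases i)
    case 0
    then show ?thesis using xi x by (simp add: image_iff) (metis list.sel(3))
  next
    case (Suc j)
    have "(j, remove_nth j x') \<in> axis_lines d (slice c T)"
      using xi x Suc by (auto simp: axis_lines_def slice_def)
    moreover have "c \<in> hd ` T" using xi x by (metis list.sel(1) image_eqI)
    ultimately show ?thesis using xi x Suc by force
  qed
next
  fix p assume "p \<in> ?first \<union> ?later"
  then show "p \<in> axis_lines (Suc d) T"
  proof
    assume "p \<in> ?first"
    then obtain x where x: "x \<in> T" "p = (0, tl x)" by auto
    obtain c x' where "x = c # x'" using assms x(1) by (cases x) auto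
    then show ?thesis using x by (force simp: axis_lines_def)
  next
    assume "p \<in> ?later"
    then obtain c i x' where "c # x' \<in> T" "i < d" "p = (Suc i, c # remove_nth i x')"
      by (auto simp: axis_lines_def slice_def)
    then show ?thesis unfolding axis_lines_def
      by (intro UN_I[of "c # x'"]) (auto intro!: image_eqI[of _ _ "Suc i"])
  qed
qed

lemma card_axis_lines_Suc:
  assumes "\<forall>x\<in>T. length x = Suc d" "finite T"
  shows "card (axis_lines (Suc d) T) = card (tl ` T) + (\<Sum>c\<in>hd ` T. card (axis_lines d (slice c T)))"
proof -
  have inj: "inj_on (\<lambda>(i, z). (Suc i, c # z)) X" for c and X :: "(nat \<times> 'a list) set"
    by (auto simp: inj_on_def)
  have "card (axis_lines (Suc d) T) = card (Pair (0::nat) ` tl ` T) +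
      card (\<Union>c\<in>hd ` T. (\<lambda>(i, z). (Suc i, c # z)) ` axis_lines d (slice c T))"
    unfolding axis_lines_Suc[OF assms(1)]
    by (rule card_Un_disjoint) (auto simp: assms(2) finite_axis_lines finite_slice)
  also have "card (Pair (0::nat) ` tl ` T) = card (tl ` T)"
    by (rule card_image) (auto simp: inj_on_def)
  also have "card (\<Union>c\<in>hd ` T. (\<lambda>(i, z). (Suc i, c # z)) ` axis_lines d (slice c T))
      = (\<Sum>c\<in>hd ` T. card ((\<lambda>(i, z). (Suc i, c # z)) ` axis_lines d (slice c T)))"
    by (rule card_UN_disjoint) (auto simp: assms(2) finite_axis_lines finite_slice)
  also have "\<dots> = (\<Sum>c\<in>hd ` T. card (axis_lines d (slice c T)))"
    by (intro sum.cong refl card_image inj)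
  finally show ?thesis .
qed

lemma card_eq_sum_card_slice:
  assumes "\<forall>x\<in>T. length x = Suc d" "finite T"
  shows "card T = (\<Sum>c\<in>hd ` T. card (slice c T))"
proof -
  have "T = (\<Union>c\<in>hd ` T. Cons c ` slice c T)"
  proof (intro set_eqI iffI)
    fix x assume "x \<in> T"
    moreover obtain c x' where "x = c # x'" using assms(1) \<open>x \<in> T\<close> by (cases x) auto
    ultimately show "x \<in> (\<Union>c\<in>hd ` T. Cons c ` slice c T)" by (force simp: slice_def)
  qed (auto simp: slice_def)
  then have "card T = card (\<Union>c\<in>hd ` T. Cons c ` slice c T)" by simp
  also have "\<dots> = (\<Sum>c\<in>hd ` T. card (Cons c ` slice c T))"
    by (rule card_UN_disjoint) (auto simp: assms(2) finite_slice)
  also have "\<dots> = (\<Sum>c\<in>hd ` T. card (slice c T))"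
    by (intro sum.cong refl card_image) auto
  finally show ?thesis .
qed

text \<open>Induction on d splits T by first coordinate;
  the slices are bounded by the number M of lines in direction 0, so the induction
  hypothesis is applied with side length the d-th root of M.\<close>

lemma card_axis_lines_ge:
  fixes T :: "'a list set" and k :: real
  assumes "1 \<le> d" "finite T" "\<forall>x\<in>T. length x = d" "0 < k" "card T \<le> k ^ d"
  shows "real d * card T / k \<le> card (axis_lines d T)"
  using assms
proof (induction d arbitrary: T k)
  case (Suc d)
  show ?case
  proof (cases "T = {} \<or> d = 0")
    case True
    then consider "T = {}" | "d = 0" "axis_lines (Suc d) T = {(0, [])}"
      using True Suc.prems(3) by (cases "T = {}") (auto simp: axis_lines_def remove_nth_def)
    then show ?thesis
    proof cases
      case 2
      then show ?thesis using Suc.prems(4,5) by (simp add: field_simps)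
    qed simp
  next
    case False
    define M where "M = card (tl ` T)"
    have "0 < M" using False Suc.prems(2) by (simp add: M_def card_gt_0_iff)
    define k' where "k' = root d M"
    have k': "0 < k'" "k' ^ d = M" using \<open>0 < M\<close> False by (simp_all add: k'_def)
    have IH: "real d * card (slice c T) / k' \<le> card (axis_lines d (slice c T))" for c
    proof (rule Suc.IH)
      have "card (slice c T) \<le> M"
        unfolding M_def by (rule card_mono) (auto simp: Suc.prems(2) slice_subset_tl_image)
      then show "card (slice c T) \<le> k' ^ d" using k' by simp
      show "finite (slice c T)" using Suc.prems(2) by (rule finite_slice)
      show "\<forall>x\<in>slice c T. length x = d" using Suc.prems(3) by (force simp: slice_def)
    qed (use False k' in auto)
    have N: "real (card T) = (\<Sum>c\<in>hd ` T. real (card (slice c T)))"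
      using card_eq_sum_card_slice[OF Suc.prems(3,2)] by simp
    have "real (Suc d) * card T / k \<le> k' ^ d + real d * card T / k'"
      by (rule scaled_Bernoulli_inequality) (use Suc.prems k' in auto)
    also have "real d * card T / k' = (\<Sum>c\<in>hd ` T. real d * card (slice c T) / k')"
      unfolding N by (simp add: sum_divide_distrib sum_distrib_left)
    also have "\<dots> \<le> (\<Sum>c\<in>hd ` T. real (card (axis_lines d (slice c T))))"
      by (rule sum_mono) (rule IH)
    also have "k' ^ d + (\<Sum>c\<in>hd ` T. real (card (axis_lines d (slice c T))))
        = card (axis_lines (Suc d) T)"
      using card_axis_lines_Suc[OF Suc.prems(3,2)] k' M_def by simp
    finally show ?thesis by simp
  qed
qed simp

lemma exists_injective_line_assignment:
  fixes S :: "'a list set"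
  assumes "1 \<le> d" "finite S" "\<forall>x\<in>S. length x = d" "card S \<le> d ^ d"
  shows "\<exists>a. (\<forall>x\<in>S. \<exists>i<d. a x = (i, remove_nth i x)) \<and> inj_on a S"
proof -
  have "hall_condition S (\<lambda>x. (\<lambda>i. (i, remove_nth i x)) ` {..<d})"
    unfolding hall_condition_def
  proof (intro allI impI)
    fix T assume T: "T \<subseteq> S"
    have "real d * card T / d \<le> card (axis_lines d T)"
    proof (rule card_axis_lines_ge)
      have "card T \<le> d ^ d" using card_mono[OF assms(2) T] assms(4) by linarith
      then show "card T \<le> real d ^ d" by (metis of_nat_le_iff of_nat_power)
    qed (use assms T in \<open>auto intro: finite_subset[OF T]\<close>)
    then show "card T \<le> card (\<Union>x\<in>T. (\<lambda>i. (i, remove_nth i x)) ` {..<d})"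
      using assms(1) by (simp add: axis_lines_def)
  qed
  then have "\<exists>a. (\<forall>x\<in>S. a x \<in> (\<lambda>i. (i, remove_nth i x)) ` {..<d}) \<and> inj_on a S"
    using assms(2) by (intro Hall_marriage) auto
  then show ?thesis by blast
qed

section \<open>Hat guessing numbers are bounded by the number of vertices\<close>

lemma card_correct_guesses_le:
  assumes fin: "finite V" and v: "v \<in> V" and irrefl: "\<not> E v v"
    and local: "\<forall>c c'. (\<forall>u\<in>V. E v u \<longrightarrow> c u = c' u) \<longrightarrow> g c = g c'"
  shows "card {c \<in> PiE V (\<lambda>_. {..<q}). g c = c v} \<le> q ^ (card V - 1)"
proof -
  let ?W = "{c \<in> PiE V (\<lambda>_. {..<q}). g c = c v}"
  have "inj_on (\<lambda>c. restrict c (V - {v})) ?W"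
  proof (rule inj_onI)
    fix c c' assume c: "c \<in> ?W" and c': "c' \<in> ?W"
      and eq: "restrict c (V - {v}) = restrict c' (V - {v})"
    have agree: "\<forall>u\<in>V - {v}. c u = c' u" using eq by (metis restrict_apply')
    then have "g c = g c'" using local irrefl by (metis Diff_iff singletonD)
    then have "c v = c' v" using c c' by simp
    then show "c = c'" using agree c c' by (intro PiE_ext[of c V "\<lambda>_. {..<q}" c']) auto
  qed
  moreover have "(\<lambda>c. restrict c (V - {v})) ` ?W \<subseteq> PiE (V - {v}) (\<lambda>_. {..<q})"
    by (auto simp: PiE_iff split: if_splits)
  ultimately have "card ?W \<le> card (PiE (V - {v}) (\<lambda>_. {..<q}))"
    using fin by (simp add: card_image[symmetric] card_mono finite_PiE)
  also have "\<dots> = q ^ (card V - 1)" using fin v by (simp add: card_PiE)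
  finally show ?thesis .
qed

text \<open>Each vertex is right on exactly a 1/q fraction of the colorings, so q vertices
  are needed to cover all of them.\<close>

lemma hat_winning_le_card:
  assumes fin: "finite V" and irrefl: "\<forall>v\<in>V. \<not> E v v" and win: "hat_winning V E q"
  shows "q \<le> card V"
proof -
  obtain f :: "'a \<Rightarrow> ('a \<Rightarrow> nat) \<Rightarrow> nat" where
    local: "\<forall>v\<in>V. \<forall>c c'. (\<forall>u\<in>V. E v u \<longrightarrow> c u = c' u) \<longrightarrow> f v c = f v c'" and
    wins: "\<forall>c. (\<forall>v\<in>V. c v < q) \<longrightarrow> (\<exists>v\<in>V. f v c = c v)"
    using win unfolding hat_winning_def by blast
  define n where "n = card V"
  let ?C = "PiE V (\<lambda>_. {..<q})"
  have "?C \<subseteq> (\<Union>v\<in>V. {c \<in> ?C. f v c = c v})"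
    using wins by (force simp: PiE_iff)
  moreover have "finite (\<Union>v\<in>V. {c \<in> ?C. f v c = c v})"
    using fin by (simp add: finite_PiE)
  ultimately have "card ?C \<le> card (\<Union>v\<in>V. {c \<in> ?C. f v c = c v})"
    by (rule card_mono[rotated])
  then have "q ^ n \<le> card (\<Union>v\<in>V. {c \<in> ?C. f v c = c v})"
    using fin by (simp add: card_PiE n_def)
  also have "\<dots> \<le> (\<Sum>v\<in>V. card {c \<in> ?C. f v c = c v})" by (rule card_UN_le[OF fin])
  also have "\<dots> \<le> (\<Sum>v\<in>V. q ^ (n - 1))"
  proof (rule sum_mono)
    fix v assume "v \<in> V"
    then show "card {c \<in> ?C. f v c = c v} \<le> q ^ (n - 1)"
      unfolding n_def using fin irrefl local by (intro card_correct_guesses_le[where E = E]) blast+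
  qed
  also have "\<dots> = n * q ^ (n - 1)" by (simp add: n_def)
  finally have le: "q ^ n \<le> n * q ^ (n - 1)" .
  show ?thesis
  proof (rule ccontr)
    assume "\<not> q \<le> card V"
    then have "n < q" "0 < q ^ (n - 1)" by (simp_all add: n_def)
    moreover have "q ^ n = q * q ^ (n - 1)" if "n \<noteq> 0" using that by (metis power_eq_if)
    ultimately show False using le by (cases "n = 0") auto
  qed
qed

lemma le_HG:
  assumes "finite V" "\<forall>v\<in>V. \<not> E v v" "hat_winning V E q"
  shows "q \<le> HG V E"
  unfolding HG_def using assms
  by (intro Greatest_le_nat[where b = "card V"]) (auto intro: hat_winning_le_card)

section \<open>The guessing functions of the outer vertices\<close>

lemma card_not_onto_le:
  assumes U: "finite U" and T: "T \<subseteq> U"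
  shows "card {g \<in> PiE U (\<lambda>_. {..<q}). \<not> {..<q} \<subseteq> g ` T}
    \<le> q * ((q - 1) ^ card T * q ^ (card U - card T))"
proof -
  define C where "C c = PiE U (\<lambda>x. if x \<in> T then {..<q} - {c} else {..<q})" for c
  have "{g \<in> PiE U (\<lambda>_. {..<q}). \<not> {..<q} \<subseteq> g ` T} \<subseteq> (\<Union>c<q. C c)"
  proof
    fix g assume g: "g \<in> {g \<in> PiE U (\<lambda>_. {..<q}). \<not> {..<q} \<subseteq> g ` T}"
    then obtain c where "c < q" "c \<notin> g ` T" by auto
    with g show "g \<in> (\<Union>c<q. C c)" by (intro UN_I[of c]) (auto simp: C_def PiE_iff)
  qed
  then have "card {g \<in> PiE U (\<lambda>_. {..<q}). \<not> {..<q} \<subseteq> g ` T} \<le> card (\<Union>c<q. C c)"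
    by (rule card_mono[rotated]) (auto simp: C_def U intro!: finite_PiE)
  also have "\<dots> \<le> (\<Sum>c<q. card (C c))" by (rule card_UN_le) simp
  also have "\<dots> = (\<Sum>c<q. (q - 1) ^ card T * q ^ (card U - card T))"
  proof (rule sum.cong[OF refl])
    fix c assume "c \<in> {..<q}"
    have "card (C c) = (\<Prod>x\<in>U. card (if x \<in> T then {..<q} - {c} else {..<q}))"
      unfolding C_def using U by (simp add: card_PiE)
    also have "\<dots> = (\<Prod>x\<in>U. if x \<in> T then q - 1 else q)"
      using \<open>c \<in> {..<q}\<close> by (intro prod.cong) auto
    also have "\<dots> = (\<Prod>x\<in>T. q - 1) * (\<Prod>x\<in>U - T. q)"
      using U T by (simp add: prod.If_cases Int_absorb1 Diff_eq)
    finally show "card (C c) = (q - 1) ^ card T * q ^ (card U - card T)"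
      using U T by (simp add: card_Diff_subset finite_subset)
  qed
  finally show ?thesis by simp
qed

lemma exists_family_onto_subsets:
  fixes U :: "'a set" and q N m :: nat
  assumes U: "finite U"
    and count: "(card U choose N) * (q * ((q - 1) ^ N * q ^ (card U - N))) ^ m < (q ^ card U) ^ m"
  shows "\<exists>G :: nat \<Rightarrow> 'a \<Rightarrow> nat. \<forall>T\<subseteq>U. card T = N \<longrightarrow> (\<exists>j<m. {..<q} \<subseteq> G j ` T)"
proof (rule ccontr)
  assume no_family: "\<not> ?thesis"
  define Fs where "Fs = PiE {..<m} (\<lambda>_. PiE U (\<lambda>_. {..<q}))"
  define Ts where "Ts = {T. T \<subseteq> U \<and> card T = N}"
  define Bad where "Bad T = PiE {..<m} (\<lambda>_. {g \<in> PiE U (\<lambda>_. {..<q}). \<not> {..<q} \<subseteq> g ` T})"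
    for T
  have "Fs \<subseteq> (\<Union>T\<in>Ts. Bad T)"
  proof
    fix G assume G: "G \<in> Fs"
    have "\<not> (\<forall>T\<subseteq>U. card T = N \<longrightarrow> (\<exists>j<m. {..<q} \<subseteq> G j ` T))"
      using no_family by (intro notI) (erule notE, rule exI)
    then obtain T where T: "T \<subseteq> U" "card T = N" "\<forall>j<m. \<not> {..<q} \<subseteq> G j ` T"
      by blast
    have "G \<in> Bad T" using G T(3) by (auto simp: Fs_def Bad_def PiE_iff)
    then show "G \<in> (\<Union>T\<in>Ts. Bad T)" using T(1,2) by (auto simp: Ts_def)
  qed
  moreover have "finite Ts" unfolding Ts_def using U by simp
  moreover have "finite (Bad T)" for T using U by (simp add: Bad_def finite_PiE)
  ultimately have "card Fs \<le> card (\<Union>T\<in>Ts. Bad T)"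
    by (intro card_mono finite_UN_I) auto
  also have "\<dots> \<le> (\<Sum>T\<in>Ts. card (Bad T))"
    using \<open>finite Ts\<close> by (rule card_UN_le)
  also have "\<dots> \<le> (\<Sum>T\<in>Ts. (q * ((q - 1) ^ N * q ^ (card U - N))) ^ m)"
  proof (rule sum_mono)
    fix T assume "T \<in> Ts"
    then show "card (Bad T) \<le> (q * ((q - 1) ^ N * q ^ (card U - N))) ^ m"
      unfolding Bad_def Ts_def using card_not_onto_le[OF U, of T q]
      by (simp add: card_PiE power_mono)
  qed
  also have "\<dots> = (card U choose N) * (q * ((q - 1) ^ N * q ^ (card U - N))) ^ m"
    using U by (simp add: Ts_def n_subsets)
  finally show False using count U by (simp add: Fs_def card_PiE)
qed

lemma family_count_less:
  fixes q d N m :: nat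
  assumes q: "1 \<le> q" and ineq: "q ^ (d * N + m) * (q - 1) ^ (N * m) < q ^ (N * m)"
  shows "(q ^ d choose N) * (q * ((q - 1) ^ N * q ^ (q ^ d - N))) ^ m < (q ^ q ^ d) ^ m"
proof (cases "N \<le> q ^ d")
  case True
  define X where "X = q ^ d"
  have "(X choose N) * (q * ((q - 1) ^ N * q ^ (X - N))) ^ m
      \<le> q ^ (d * N) * (q * ((q - 1) ^ N * q ^ (X - N))) ^ m"
    using binomial_le_pow[OF True] by (simp add: X_def power_mult)
  also have "\<dots> = q ^ (d * N) * (q ^ m * (q - 1) ^ (N * m) * q ^ ((X - N) * m))"
    by (simp only: power_mult_distrib power_mult mult.assoc)
  also have "\<dots> = (q ^ (d * N + m) * (q - 1) ^ (N * m)) * q ^ ((X - N) * m)"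
    by (simp only: power_add mult.assoc)
  also have "\<dots> < q ^ (N * m) * q ^ ((X - N) * m)"
    using ineq q by (intro mult_strict_right_mono) simp_all
  also have "\<dots> = (q ^ X) ^ m"
    using True by (simp add: X_def power_add[symmetric] power_mult[symmetric] add_mult_distrib[symmetric])
  finally show ?thesis by (simp add: X_def)
qed (use q in \<open>simp add: binomial_eq_0\<close>)

lemma two_mult_power_le_Suc_power:
  assumes "1 \<le> n"
  shows "2 * n ^ Suc n \<le> Suc n ^ Suc n"
proof -
  have n: "0 < real n" using assms by simp
  have "2 \<le> 1 + real (Suc n) * (1 / n)" using n by (simp add: field_simps)
  also have "\<dots> \<le> (1 + 1 / n) ^ Suc n"
  proof (rule Bernoulli_inequality)
    have "0 \<le> 1 / real n" by simp
    then show "- 1 \<le> 1 / real n" by linarith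
  qed
  also have "1 + 1 / real n = real (Suc n) / n" using n by (simp add: field_simps)
  finally have "2 * real n ^ Suc n \<le> real (Suc n) ^ Suc n"
    using n by (simp add: power_divide field_simps)
  then have "real (2 * n ^ Suc n) \<le> real (Suc n ^ Suc n)"
    by (simp only: of_nat_mult of_nat_power of_nat_numeral)
  then show ?thesis by (simp only: of_nat_le_iff)
qed

text \<open>With q = d^e one has (q-1)^(Nm) \<le> q^(Nm) 2^(-Nm/q), and Nm/q = N d^5 beats the
  exponent e d (d N + m) coming from q \<le> 2^(d e).\<close>

lemma book_count_ineq:
  fixes e :: nat
  defines "d \<equiv> e + 2"
  defines "q \<equiv> d ^ e"
  defines "N \<equiv> d ^ d + 1"
  defines "m \<equiv> d ^ d * d ^ 3"
  assumes e: "2 \<le> e"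
  shows "q ^ (d * N + m) * (q - 1) ^ (N * m) < q ^ (N * m)"
proof -
  have d4: "4 \<le> d" using e by (simp add: d_def)
  have "d ^ 1 \<le> d ^ e" using e d4 by (intro power_increasing) auto
  then have q2: "2 \<le> q" using d4 by (simp add: q_def)
  have "d ^ d = q * d ^ 2" unfolding q_def by (metis d_def power_add)
  then have Nm: "N * m = q * (N * d ^ 5)" by (simp add: m_def power_add[symmetric] mult_ac)
  have "2 * (q - 1) ^ q \<le> q ^ q"
    using two_mult_power_le_Suc_power[of "q - 1"] q2 by (simp add: Suc_diff_1)
  then have "(2 * (q - 1) ^ q) ^ (N * d ^ 5) \<le> (q ^ q) ^ (N * d ^ 5)" by (rule power_mono) simp
  then have A: "2 ^ (N * d ^ 5) * (q - 1) ^ (N * m) \<le> q ^ (N * m)"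
    by (simp add: Nm power_mult power_mult_distrib)
  have "q \<le> (2 ^ d) ^ e" unfolding q_def by (intro power_mono less_imp_le[OF less_exp]) simp
  then have "q ^ (d * N + m) \<le> ((2 ^ d) ^ e) ^ (d * N + m)" by (rule power_mono) simp
  also have "\<dots> = 2 ^ (d * e * (d * N + m))" by (simp add: power_mult)
  also have "\<dots> < 2 ^ (N * d ^ 5)"
  proof (rule power_strict_increasing)
    have "e * ((e + 2) * (D + 1) + D * (e + 2) ^ 3) < (D + 1) * (e + 2) ^ 4" for D
      by (simp add: eval_nat_numeral algebra_simps)
    from this[of "d ^ d", folded d_def]
    have "d * (e * (d * N + m)) < d * (N * d ^ 4)"
      using d4 by (simp add: N_def m_def mult_ac)
    then show "d * e * (d * N + m) < N * d ^ 5"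
      by (simp add: eval_nat_numeral mult_ac)
  qed simp
  finally have B: "q ^ (d * N + m) < 2 ^ (N * d ^ 5)" .
  have "0 < (q - 1) ^ (N * m)" using q2 by simp
  then have "q ^ (d * N + m) * (q - 1) ^ (N * m) < 2 ^ (N * d ^ 5) * (q - 1) ^ (N * m)"
    using B by simp
  with A show ?thesis by linarith
qed

definition tuples :: "nat \<Rightarrow> nat \<Rightarrow> nat list set" where
  "tuples q d = {xs. set xs \<subseteq> {..<q} \<and> length xs = d}"

lemma finite_tuples: "finite (tuples q d)"
  unfolding tuples_def by (rule finite_lists_length_eq) simp

lemma card_tuples: "card (tuples q d) = q ^ d"
  unfolding tuples_def by (simp add: card_lists_length_eq)

lemma exists_book_family:
  assumes "1 \<le> d"
  shows "\<exists>G :: nat \<Rightarrow> nat list \<Rightarrow> nat. \<forall>T\<subseteq>tuples (d ^ (d - 2)) d. card T = d ^ d + 1 \<longrightarrow>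
    (\<exists>j < d ^ d * d ^ 3. {..<d ^ (d - 2)} \<subseteq> G j ` T)"
proof (cases "4 \<le> d")
  case True
  define q where "q = d ^ (d - 2)"
  have "d = (d - 2) + 2" "2 \<le> d - 2" using True by simp_all
  then have "q ^ (d * (d ^ d + 1) + d ^ d * d ^ 3) * (q - 1) ^ ((d ^ d + 1) * (d ^ d * d ^ 3))
      < q ^ ((d ^ d + 1) * (d ^ d * d ^ 3))"
    unfolding q_def by (metis book_count_ineq)
  then have "(card (tuples q d) choose (d ^ d + 1)) *
      (q * ((q - 1) ^ (d ^ d + 1) * q ^ (card (tuples q d) - (d ^ d + 1)))) ^ (d ^ d * d ^ 3)
      < (q ^ card (tuples q d)) ^ (d ^ d * d ^ 3)"
    unfolding card_tuples using True by (intro family_count_less) (simp_all add: q_def)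
  then show ?thesis unfolding q_def by (rule exists_family_onto_subsets[OF finite_tuples])
next
  case False
  then have "d = 1 \<or> d = 2 \<or> d = 3" using assms by linarith
  then have "(d ^ (d - 2)) ^ d \<le> d ^ d" by auto
  then have small: "card T \<le> d ^ d" if "T \<subseteq> tuples (d ^ (d - 2)) d" for T
    using card_mono[OF finite_tuples that] by (simp add: card_tuples)
  show ?thesis
  proof (intro exI[of _ "\<lambda>_ _. 0"] allI impI)
    fix T assume T: "T \<subseteq> tuples (d ^ (d - 2)) d" "card T = d ^ d + 1"
    then show "\<exists>j < d ^ d * d ^ 3. {..<d ^ (d - 2)} \<subseteq> (\<lambda>_ _. 0) j ` T"
      using small[OF T(1)] by simp
  qed
qed

section \<open>The strategy on the book graph\<close>

definition clique_colors :: "nat \<Rightarrow> (nat + nat \<Rightarrow> nat) \<Rightarrow> nat list" where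
  "clique_colors d c = map (\<lambda>i. c (Inl i)) [0..<d]"

definition outer_colors :: "nat \<Rightarrow> (nat + nat \<Rightarrow> nat) \<Rightarrow> nat \<Rightarrow> nat" where
  "outer_colors m c j = (if j < m then c (Inr j) else 0)"

definition missed :: "nat \<Rightarrow> nat \<Rightarrow> nat \<Rightarrow> (nat \<Rightarrow> nat list \<Rightarrow> nat) \<Rightarrow> (nat \<Rightarrow> nat) \<Rightarrow> nat list set"
  where "missed q d m G y = {x \<in> tuples q d. \<forall>j<m. G j x \<noteq> y j}"

text \<open>A y is meant to be an injective assignment of lines to the points of missed q d m G y,
  each point getting a line through it.\<close>

definition book_strategy ::
  "nat \<Rightarrow> nat \<Rightarrow> nat \<Rightarrow> (nat \<Rightarrow> nat list \<Rightarrow> nat) \<Rightarrow> ((nat \<Rightarrow> nat) \<Rightarrow> nat list \<Rightarrow> nat \<times> nat list)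
    \<Rightarrow> nat + nat \<Rightarrow> (nat + nat \<Rightarrow> nat) \<Rightarrow> nat"
  where "book_strategy q d m G A v c = (case v of
      Inl i \<Rightarrow>
        (let y = outer_colors m c; line = (i, remove_nth i (clique_colors d c)) in
          if \<exists>p\<in>missed q d m G y. A y p = line
          then (SOME p. p \<in> missed q d m G y \<and> A y p = line) ! i else 0)
    | Inr j \<Rightarrow> (if G j (clique_colors d c) < q then G j (clique_colors d c) else 0))"

lemma remove_nth_clique_colors_cong:
  assumes "\<forall>k<d. k \<noteq> i \<longrightarrow> c (Inl k) = c' (Inl k)"
  shows "remove_nth i (clique_colors d c) = remove_nth i (clique_colors d c')"
proof -
  have "take i [0..<d] = [0..<min i d]" by (cases "i \<le> d") (simp_all add: min_def)
  then have "take i (clique_colors d c) = take i (clique_colors d c')"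
    unfolding clique_colors_def take_map using assms by (intro map_cong) auto
  moreover have "drop (Suc i) (clique_colors d c) = drop (Suc i) (clique_colors d c')"
    unfolding clique_colors_def drop_map using assms by (intro map_cong) auto
  ultimately show ?thesis by (simp add: remove_nth_def)
qed

lemma book_strategy_local:
  assumes "v \<in> book_vertices d m" and "\<forall>u\<in>book_vertices d m. book_adj v u \<longrightarrow> c u = c' u"
  shows "book_strategy q d m G A v c = book_strategy q d m G A v c'"
proof (cases v)
  case (Inl i)
  have "outer_colors m c = outer_colors m c'"
    using assms Inl by (auto simp: outer_colors_def book_vertices_def)
  moreover have "remove_nth i (clique_colors d c) = remove_nth i (clique_colors d c')"
    using assms Inl by (intro remove_nth_clique_colors_cong) (auto simp: book_vertices_def)
  ultimately show ?thesis by (simp add: book_strategy_def Inl)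
next
  case (Inr j)
  have "clique_colors d c = clique_colors d c'"
    using assms Inr by (auto simp: clique_colors_def book_vertices_def)
  then show ?thesis by (simp add: book_strategy_def Inr)
qed

lemma book_strategy_less:
  assumes "1 \<le> q" "v \<in> book_vertices d m"
  shows "book_strategy q d m G A v c < q"
proof (cases v)
  case (Inl i)
  define P where "P p \<longleftrightarrow> p \<in> missed q d m G (outer_colors m c) \<and>
      A (outer_colors m c) p = (i, remove_nth i (clique_colors d c))" for p
  have "i < d" using assms Inl by (auto simp: book_vertices_def)
  have "(SOME p. P p) ! i < q" if "\<exists>p. P p"
  proof -
    have "(SOME p. P p) \<in> tuples q d" using someI_ex[OF that] by (simp add: P_def missed_def)
    then show ?thesis using \<open>i < d\<close> by (auto simp: tuples_def dest: nth_mem)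
  qed
  then show ?thesis using assms(1) by (auto simp: book_strategy_def Inl Let_def P_def)
next
  case (Inr j)
  then show ?thesis using assms(1) by (simp add: book_strategy_def)
qed

lemma book_strategy_wins:
  assumes assign: "\<And>y. \<forall>j<m. y j < q \<Longrightarrow>
      (\<forall>x\<in>missed q d m G y. \<exists>i<d. A y x = (i, remove_nth i x)) \<and> inj_on (A y) (missed q d m G y)"
    and c: "\<forall>v\<in>book_vertices d m. c v < q"
  shows "\<exists>v\<in>book_vertices d m. book_strategy q d m G A v c = c v"
proof (rule ccontr)
  assume all_wrong: "\<not> ?thesis"
  define x where "x = clique_colors d c"
  define y where "y = outer_colors m c"
  have y: "\<forall>j<m. y j < q" using c by (auto simp: y_def outer_colors_def book_vertices_def)
  have "x \<in> tuples q d" using c by (auto simp: x_def clique_colors_def tuples_def book_vertices_def)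
  moreover have "G j x \<noteq> y j" if "j < m" for j
  proof -
    have "Inr j \<in> book_vertices d m" using that by (simp add: book_vertices_def)
    then show ?thesis using all_wrong c that
      by (auto simp: book_strategy_def x_def y_def outer_colors_def split: if_splits)
  qed
  ultimately have x_missed: "x \<in> missed q d m G y" by (simp add: missed_def)
  then obtain i where i: "i < d" "A y x = (i, remove_nth i x)" using assign[OF y] by blast
  have "p = x" if "p \<in> missed q d m G y" "A y p = (i, remove_nth i x)" for p
    using assign[OF y] x_missed that i(2) by (metis inj_onD)
  then have "(SOME p. p \<in> missed q d m G y \<and> A y p = (i, remove_nth i x)) = x"
    using x_missed i(2) by (intro some_equality) auto
  then have "book_strategy q d m G A (Inl i) c = x ! i"
    using x_missed i(2) by (auto simp: book_strategy_def x_def y_def Let_def)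
  also have "x ! i = c (Inl i)" using i(1) by (simp add: x_def clique_colors_def)
  finally show False using all_wrong i(1) by (auto simp: book_vertices_def)
qed

lemma card_missed_le:
  assumes G: "\<forall>T\<subseteq>tuples q d. card T = N + 1 \<longrightarrow> (\<exists>j<m. {..<q} \<subseteq> G j ` T)"
    and y: "\<forall>j<m. y j < q"
  shows "card (missed q d m G y) \<le> N"
proof (rule ccontr)
  assume "\<not> ?thesis"
  then have "N + 1 \<le> card (missed q d m G y)" by simp
  then obtain T where T: "T \<subseteq> missed q d m G y" "card T = N + 1"
    by (rule obtain_subset_with_card_n)
  moreover have "T \<subseteq> tuples q d" using T(1) by (auto simp: missed_def)
  ultimately obtain j where j: "j < m" "{..<q} \<subseteq> G j ` T"
    using G by blast
  then obtain x where "x \<in> T" "G j x = y j" using y by auto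
  then show False using T(1) j(1) by (auto simp: missed_def)
qed

lemma hat_winning_book:
  assumes d: "1 \<le> d" and q: "1 \<le> q"
    and G: "\<forall>T\<subseteq>tuples q d. card T = d ^ d + 1 \<longrightarrow> (\<exists>j<m. {..<q} \<subseteq> G j ` T)"
  shows "hat_winning (book_vertices d m) book_adj q"
proof -
  let ?assignment = "\<lambda>y a. (\<forall>x\<in>missed q d m G y. \<exists>i<d. a x = (i, remove_nth i x))
    \<and> inj_on a (missed q d m G y)"
  define A where "A y = (SOME a. ?assignment y a)" for y
  have exists_assignment: "\<exists>a. ?assignment y a" if "\<forall>j<m. y j < q" for y
  proof (rule exists_injective_line_assignment[OF d])
    show "finite (missed q d m G y)"
      using finite_tuples by (simp add: missed_def)
    show "\<forall>x\<in>missed q d m G y. length x = d" by (simp add: missed_def tuples_def)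
    show "card (missed q d m G y) \<le> d ^ d" using G that by (rule card_missed_le)
  qed
  have assign: "?assignment y (A y)" if "\<forall>j<m. y j < q" for y
    unfolding A_def by (rule someI_ex[OF exists_assignment[OF that]])
  show ?thesis unfolding hat_winning_def
  proof (intro exI[of _ "book_strategy q d m G A"] conjI ballI allI impI)
    show "book_strategy q d m G A v c = book_strategy q d m G A v c'"
      if "v \<in> book_vertices d m" "\<forall>u\<in>book_vertices d m. book_adj v u \<longrightarrow> c u = c' u"
      for v c c' using that by (rule book_strategy_local)
    show "book_strategy q d m G A v c < q" if "v \<in> book_vertices d m" for v c
      using q that by (rule book_strategy_less)
    show "\<exists>v\<in>book_vertices d m. book_strategy q d m G A v c = c v"
      if "\<forall>v\<in>book_vertices d m. c v < q" for c
      by (rule book_strategy_wins, erule assign, rule that)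
  qed
qed

lemma book_adj_irrefl: "\<not> book_adj v v"
  by (cases v) simp_all

theorem mainTheorem4:
  fixes d m :: nat
  assumes "d \<ge> 1"
    and "m = d ^ d * d ^ 3"
  shows "d ^ (d - 2) \<le> HG (book_vertices d m) book_adj"
proof (rule le_HG)
  show "finite (book_vertices d m)" by (simp add: book_vertices_def)
  show "\<forall>v\<in>book_vertices d m. \<not> book_adj v v" by (simp add: book_adj_irrefl)
  obtain G where "\<forall>T\<subseteq>tuples (d ^ (d - 2)) d. card T = d ^ d + 1 \<longrightarrow>
      (\<exists>j<m. {..<d ^ (d - 2)} \<subseteq> G j ` T)"
    using exists_book_family[OF assms(1)] assms(2) by blast
  then show "hat_winning (book_vertices d m) book_adj (d ^ (d - 2))"
    using assms(1) by (intro hat_winning_book) simp_all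
qed

end
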